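(* Let $p$ be a positive integer and $n>0$ an integer such that $\mathcal{S}_{p,n}:=p^2 16^n+1$ is prime. Let $E/\mathbb{F}_{\mathcal{S}_{p,n}}$ be the elliptic curve $y^2=x^3-x$. Then $\#E(\mathbb{F}_{\mathcal{S}_{p,n}})=p^2 16^n$. *)

theory Defs
  imports "HOL-Computational_Algebra.Primes"
begin

definition wpoints_affine :: "int \<Rightarrow> int \<Rightarrow> int \<Rightarrow> (int \<times> int) set" where
  "wpoints_affine q a b =
     {(x, y). x \<in> {0..<q} \<and> y \<in> {0..<q} \<and> y ^ 2 mod q = (x ^ 3 + a * x + b) mod q}"

text \<open>Number of F_q-rational points: affine points plus the point at infinity.\<close>
definition wcard :: "int \<Rightarrow> int \<Rightarrow> int \<Rightarrow> nat" where
  "wcard q a b = card (wpoints_affine q a b) + 1"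

end

theory Submission
  imports Defs "HOL-Number_Theory.Number_Theory"
begin

text \<open>Let \<open>q = m\<^sup>2 + 1\<close> and let \<open>\<phi>(a) = \<Sum>x. Legendre (x (x\<^sup>2 + a)) q\<close> be the Jacobsthal
  sums, so that the curve \<open>y\<^sup>2 = x\<^sup>3 - x\<close> has \<open>q + \<phi>(-1)\<close> affine points. Since \<open>\<phi>(a)\<^sup>2\<close> only
  depends on the quadratic character of \<open>a\<close>, summing \<open>\<phi>(a)\<^sup>2\<close> over all \<open>a\<close> gives Jacobsthal's
  identity \<open>\<phi>(-1)\<^sup>2 + T\<^sup>2 = 4 q\<close>. The maps \<open>x \<mapsto> -x\<close> and \<open>x \<mapsto> 1/x\<close> act freely on the residues
  where the summand of \<open>\<phi>(-1)\<close> is \<open>-1\<close>, which gives \<open>\<phi>(-1) \<equiv> q - 3 (mod 8)\<close>. When \<open>4\<close> divides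
  \<open>m\<close>, this makes \<open>\<phi>(-1) = 2 u\<close> with \<open>u \<equiv> -1 (mod 4)\<close>; as the prime \<open>m\<^sup>2 + 1\<close> is a sum of two
  squares only as \<open>1 + m\<^sup>2\<close>, we get \<open>u = -1\<close>, hence \<open>q - 2\<close> affine points.\<close>

lemma four_dvd_card_if_free_klein_action:
  assumes "finite A"
    and "\<forall>x\<in>A. \<sigma> x \<in> A \<and> \<tau> x \<in> A \<and> \<sigma> (\<sigma> x) = x \<and> \<tau> (\<tau> x) = x \<and> \<sigma> (\<tau> x) = \<tau> (\<sigma> x)
                \<and> \<sigma> x \<noteq> x \<and> \<tau> x \<noteq> x \<and> \<sigma> x \<noteq> \<tau> x"
  shows "4 dvd card A"
  using assms
proof (induction A rule: finite_psubset_induct)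
  case (psubset A)
  show ?case
  proof (cases "A = {}")
    case False
    then obtain x where x: "x \<in> A" by blast
    define orbit where "orbit = {x, \<sigma> x, \<tau> x, \<sigma> (\<tau> x)}"
    have x_facts: "\<sigma> x \<in> A" "\<tau> x \<in> A" "\<sigma> (\<sigma> x) = x" "\<tau> (\<tau> x) = x" "\<sigma> (\<tau> x) = \<tau> (\<sigma> x)"
      "\<sigma> x \<noteq> x" "\<tau> x \<noteq> x" "\<sigma> x \<noteq> \<tau> x"
      using x psubset.prems by auto
    have "\<sigma> (\<sigma> (\<tau> x)) = \<tau> x" "\<sigma> (\<tau> x) \<noteq> \<tau> x" "\<tau> (\<sigma> (\<tau> x)) = \<sigma> x"
      using x_facts(2) psubset.prems x_facts(4) by metis+
    then have orbit_closed: "\<sigma> ` orbit \<subseteq> orbit" "\<tau> ` orbit \<subseteq> orbit"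
      and "card orbit = 4"
      using x_facts unfolding orbit_def by (auto simp: card_insert_if)
    have orbit_sub: "orbit \<subseteq> A" using x x_facts psubset.prems unfolding orbit_def by auto
    have "4 dvd card (A - orbit)"
    proof (rule psubset.IH)
      show "A - orbit \<subset> A" using x unfolding orbit_def by auto
      have "\<sigma> y \<notin> orbit" "\<tau> y \<notin> orbit" if "y \<in> A - orbit" for y
        using that psubset.prems orbit_closed by (metis Diff_iff image_subset_iff)+
      then show "\<forall>y\<in>A - orbit. \<sigma> y \<in> A - orbit \<and> \<tau> y \<in> A - orbit \<and> \<sigma> (\<sigma> y) = y
          \<and> \<tau> (\<tau> y) = y \<and> \<sigma> (\<tau> y) = \<tau> (\<sigma> y) \<and> \<sigma> y \<noteq> y \<and> \<tau> y \<noteq> y \<and> \<sigma> y \<noteq> \<tau> y"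
        using psubset.prems by blast
    qed
    moreover have "card A = card (A - orbit) + card orbit"
      using orbit_sub psubset.hyps by (simp add: card_Diff_subset finite_subset card_mono)
    ultimately show ?thesis using \<open>card orbit = 4\<close> by simp
  qed simp
qed

section \<open>Quadratic character modulo an odd prime\<close>

locale odd_prime =
  fixes q :: int
  assumes prime_q: "prime q" and gt_2: "2 < q"
begin

lemma odd_q: "odd q"
  using prime_q gt_2 prime_odd_int by blast

lemma not_dvd_if_in_range: "x \<in> {1..<q} \<Longrightarrow> \<not> q dvd x"
  using zdvd_imp_le[of q x] by auto

lemma eq_0_if_dvd_small: "q dvd d \<Longrightarrow> \<bar>d\<bar> < q \<Longrightarrow> d = 0"
  using dvd_imp_le_int[of d q] gt_2 by fastforce

lemma cong_eq_iff_in_range: "x \<in> {0..<q} \<Longrightarrow> y \<in> {0..<q} \<Longrightarrow> [x = y] (mod q) \<longleftrightarrow> x = y"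
  by (simp add: cong_def)

lemma cong_mod_self: "[x mod q = x] (mod q)"
  by (simp add: cong_def)

lemma residues_eq_insert_0: "{0..<q} = insert 0 {1..<q}"
  using gt_2 by auto

lemma Legendre_cong:
  assumes "[a = b] (mod q)"
  shows "Legendre a q = Legendre b q"
proof -
  have "[a = 0] (mod q) \<longleftrightarrow> [b = 0] (mod q)" "QuadRes q a \<longleftrightarrow> QuadRes q b"
    unfolding QuadRes_def using assms cong_sym cong_trans by meson+
  then show ?thesis unfolding Legendre_def by presburger
qed

lemma Legendre_mod: "Legendre (a mod q) q = Legendre a q"
  by (rule Legendre_cong) (simp add: cong_def)

lemma Legendre_eq_0_iff: "Legendre a q = 0 \<longleftrightarrow> q dvd a"
  unfolding Legendre_def cong_0_iff by simp

lemma Legendre_cases: "Legendre a q \<in> {-1, 0, 1}"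
  unfolding Legendre_def by simp

lemma Legendre_eq_1_iff: "Legendre a q = 1 \<longleftrightarrow> \<not> q dvd a \<and> QuadRes q a"
  unfolding Legendre_def cong_0_iff by simp

lemma Legendre_euler: "[Legendre a q = a ^ nat ((q - 1) div 2)] (mod q)"
proof -
  have q: "q = int (nat q)" using gt_2 by simp
  have "prime (nat q)" using prime_q q by (metis prime_nat_int_transfer)
  moreover have "2 < nat q" using gt_2 by simp
  ultimately have "[Legendre a (int (nat q)) = a ^ ((nat q - 1) div 2)] (mod int (nat q))"
    by (rule euler_criterion)
  moreover have "(nat q - 1) div 2 = nat ((q - 1) div 2)"
    using gt_2 by (simp add: nat_div_distrib)
  ultimately show ?thesis using q by simp
qed

lemma sign_eq_if_cong:
  assumes "a \<in> {-1, 0, 1}" "b \<in> {-1, 0, 1}" "[a = b] (mod q)"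
  shows "a = b"
proof -
  have "q dvd a - b" using assms(3) by (simp add: cong_iff_dvd_diff)
  moreover have "\<bar>a - b\<bar> < q" using assms(1,2) gt_2 by fastforce
  ultimately show ?thesis using eq_0_if_dvd_small[of "a - b"] by simp
qed

lemma Legendre_mult: "Legendre (a * b) q = Legendre a q * Legendre b q"
proof (rule sign_eq_if_cong)
  show "Legendre (a * b) q \<in> {-1, 0, 1}" "Legendre a q * Legendre b q \<in> {-1, 0, 1}"
    using Legendre_cases[of a] Legendre_cases[of b] Legendre_cases[of "a * b"] by auto
  have "[Legendre (a * b) q = (a * b) ^ nat ((q - 1) div 2)] (mod q)"
    by (rule Legendre_euler)
  moreover have "[Legendre a q * Legendre b q = a ^ nat ((q - 1) div 2) * b ^ nat ((q - 1) div 2)] (mod q)"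
    by (intro cong_mult Legendre_euler)
  ultimately show "[Legendre (a * b) q = Legendre a q * Legendre b q] (mod q)"
    by (metis cong_sym cong_trans power_mult_distrib)
qed

lemma Legendre_square_eq: "Legendre a q ^ 2 = (if q dvd a then 0 else 1)"
  using Legendre_cases[of a] Legendre_eq_0_iff[of a] by auto

lemma Legendre_square: "\<not> q dvd t \<Longrightarrow> Legendre (t ^ 2) q = 1"
  using Legendre_square_eq[of t] by (simp add: power2_eq_square Legendre_mult)

lemma Legendre_cube: "Legendre (x ^ 3) q = Legendre x q"
  using Legendre_cases[of x] by (auto simp: power3_eq_cube Legendre_mult)

lemma sum_residues_affine_reindex:
  assumes "\<not> q dvd s" and periodic: "\<And>x. F (x mod q) = F x"
  shows "(\<Sum>x\<in>{0..<q}. F (s * x + d)) = (\<Sum>x\<in>{0..<q}. F x)"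
proof -
  let ?g = "\<lambda>x. (s * x + d) mod q"
  have "coprime s q"
    using assms(1) prime_q by (metis prime_imp_coprime coprime_commute)
  have inj: "inj_on ?g {0..<q}"
  proof (rule inj_onI)
    fix x y assume "x \<in> {0..<q}" "y \<in> {0..<q}" "?g x = ?g y"
    moreover from \<open>?g x = ?g y\<close> have "[s * x = s * y] (mod q)"
      by (simp add: cong_def[symmetric] cong_add_rcancel)
    ultimately show "x = y"
      using \<open>coprime s q\<close> cong_mult_lcancel cong_eq_iff_in_range by blast
  qed
  have "?g ` {0..<q} = {0..<q}"
    by (rule endo_inj_surj) (use inj gt_2 in auto)
  then have "(\<Sum>x\<in>{0..<q}. F x) = (\<Sum>x\<in>{0..<q}. F (?g x))"
    using sum.reindex[OF inj, of F] by (simp add: o_def)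
  then show ?thesis using periodic by simp
qed

lemma sum_residues_shift:
  "(\<And>x. F (x mod q) = F x) \<Longrightarrow> (\<Sum>x\<in>{0..<q}. F (x + d)) = (\<Sum>x\<in>{0..<q}. F x)"
  using sum_residues_affine_reindex[of 1 F d] gt_2 by (simp add: zdvd_not_zless)

lemma cong_square_iff: "[x ^ 2 = y ^ 2] (mod q) \<longleftrightarrow> [x = y] (mod q) \<or> [x = - y] (mod q)"
proof -
  have "x ^ 2 - y ^ 2 = (x - y) * (x + y)" by (simp add: power2_eq_square algebra_simps)
  then show ?thesis unfolding cong_iff_dvd_diff using prime_q by (simp add: prime_dvd_mult_iff)
qed

lemma square_roots_mod:
  assumes "x \<in> {1..<q}"
  shows "{y\<in>{0..<q}. [y ^ 2 = x ^ 2] (mod q)} = {x, q - x}"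
proof -
  have "[- x = q - x] (mod q)" by (simp add: cong_iff_dvd_diff)
  then have "[y = - x] (mod q) \<longleftrightarrow> [y = q - x] (mod q)" for y
    using cong_trans cong_sym by meson
  then have "y \<in> {0..<q} \<Longrightarrow> [y ^ 2 = x ^ 2] (mod q) \<longleftrightarrow> y = x \<or> y = q - x" for y
    using assms by (simp add: cong_square_iff cong_eq_iff_in_range)
  then show ?thesis using assms by auto
qed

lemma square_roots_mod_multiple:
  assumes "q dvd a"
  shows "{y\<in>{0..<q}. [y ^ 2 = a] (mod q)} = {0}"
proof -
  have "[y ^ 2 = a] (mod q) \<longleftrightarrow> [y ^ 2 = 0] (mod q)" for y
    using assms by (meson cong_0_iff cong_sym cong_trans)
  also have "[y ^ 2 = 0] (mod q) \<longleftrightarrow> q dvd y" for y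
    using prime_q by (simp add: cong_0_iff prime_dvd_power_iff)
  finally have "{y\<in>{0..<q}. [y ^ 2 = a] (mod q)} = {y\<in>{0..<q}. q dvd y}"
    by simp
  also have "\<dots> = {0}"
  proof (intro equalityI subsetI)
    fix y assume "y \<in> {y\<in>{0..<q}. q dvd y}"
    then show "y \<in> {0}" using not_dvd_if_in_range[of y] by fastforce
  qed (use gt_2 in auto)
  finally show ?thesis .
qed

lemma card_square_roots_mod_residue:
  assumes "\<not> q dvd a" and "QuadRes q a"
  shows "card {y\<in>{0..<q}. [y ^ 2 = a] (mod q)} = 2"
proof -
  obtain y where y: "[y ^ 2 = a] (mod q)" using assms(2) unfolding QuadRes_def by blast
  define x where "x = y mod q"
  have "[x ^ 2 = y ^ 2] (mod q)"
    unfolding x_def by (intro cong_pow cong_mod_self)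
  then have xa: "[x ^ 2 = a] (mod q)"
    using y by (rule cong_trans)
  then have "x \<noteq> 0" using assms(1) by (auto simp: cong_iff_dvd_diff)
  moreover have "0 \<le> x" "x < q" using gt_2 by (simp_all add: x_def)
  ultimately have x: "x \<in> {1..<q}" by simp
  have "[y ^ 2 = a] (mod q) \<longleftrightarrow> [y ^ 2 = x ^ 2] (mod q)" for y
    using xa cong_trans cong_sym by meson
  then have "{y\<in>{0..<q}. [y ^ 2 = a] (mod q)} = {x, q - x}"
    using square_roots_mod[OF x] by simp
  moreover have "x \<noteq> q - x" using odd_q by auto
  ultimately show ?thesis by simp
qed

lemma card_square_roots_mod: "int (card {y\<in>{0..<q}. [y ^ 2 = a] (mod q)}) = 1 + Legendre a q"
proof (cases "q dvd a")
  case True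
  then show ?thesis using square_roots_mod_multiple Legendre_eq_0_iff by simp
next
  case False
  show ?thesis
  proof (cases "QuadRes q a")
    case True
    then show ?thesis
      using False card_square_roots_mod_residue Legendre_eq_1_iff by simp
  next
    case not_res: False
    then have "{y\<in>{0..<q}. [y ^ 2 = a] (mod q)} = {}" unfolding QuadRes_def by blast
    then have "card {y\<in>{0..<q}. [y ^ 2 = a] (mod q)} = 0" by (simp only: card.empty)
    moreover have "Legendre a q = -1"
      using False not_res unfolding Legendre_def cong_0_iff by simp
    ultimately show ?thesis by simp
  qed
qed

lemma sum_Legendre: "(\<Sum>x\<in>{0..<q}. Legendre x q) = 0"
proof -
  let ?roots = "\<lambda>a. {y\<in>{0..<q}. [y ^ 2 = a] (mod q)}"
  have "{0..<q} = (\<Union>a\<in>{0..<q}. ?roots a)"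
    by (auto simp: cong_def intro!: bexI[of _ "_ ^ 2 mod q"])
  moreover have "card (\<Union>a\<in>{0..<q}. ?roots a) = (\<Sum>a\<in>{0..<q}. card (?roots a))"
    by (rule card_UN_disjoint) (auto simp: cong_def intro: finite_subset[of _ "{0..<q}"])
  ultimately have "card {0..<q} = (\<Sum>a\<in>{0..<q}. card (?roots a))"
    by simp
  then have "q = (\<Sum>a\<in>{0..<q}. int (card (?roots a)))"
    using gt_2 by (simp flip: of_nat_sum)
  also have "\<dots> = q + (\<Sum>a\<in>{0..<q}. Legendre a q)"
    using gt_2 by (simp only: card_square_roots_mod sum.distrib) simp
  finally show ?thesis by simp
qed

lemma sum_Legendre_nonzero: "(\<Sum>a\<in>{1..<q}. Legendre a q) = 0"
  using sum_Legendre Legendre_eq_0_iff[of 0] by (simp add: residues_eq_insert_0)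

lemma card_wpoints_affine:
  "int (card (wpoints_affine q a b)) = q + (\<Sum>x\<in>{0..<q}. Legendre (x ^ 3 + a * x + b) q)"
proof -
  let ?roots = "\<lambda>x. {y\<in>{0..<q}. [y ^ 2 = x ^ 3 + a * x + b] (mod q)}"
  have "wpoints_affine q a b = Sigma {0..<q} ?roots"
    unfolding wpoints_affine_def by (auto simp: cong_def)
  moreover have "card (Sigma {0..<q} ?roots) = (\<Sum>x\<in>{0..<q}. card (?roots x))"
    by (intro card_SigmaI) (auto intro: finite_subset[of _ "{0..<q}"])
  ultimately have "card (wpoints_affine q a b) = (\<Sum>x\<in>{0..<q}. card (?roots x))"
    by simp
  then have "int (card (wpoints_affine q a b)) = (\<Sum>x\<in>{0..<q}. int (card (?roots x)))"
    by simp
  also have "\<dots> = (\<Sum>x\<in>{0..<q}. 1 + Legendre (x ^ 3 + a * x + b) q)"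
    by (simp only: card_square_roots_mod)
  also have "\<dots> = q + (\<Sum>x\<in>{0..<q}. Legendre (x ^ 3 + a * x + b) q)"
    using gt_2 by (simp add: sum.distrib)
  finally show ?thesis .
qed

lemma sum_Legendre_shift_product_scale:
  assumes "\<not> q dvd s"
  shows "(\<Sum>b\<in>{0..<q}. Legendre (b * (b + c * s)) q) = (\<Sum>b\<in>{0..<q}. Legendre (b * (b + c)) q)"
proof -
  let ?F = "\<lambda>b. Legendre (b * (b + c * s)) q"
  have "?F (x mod q) = ?F x" for x
    by (intro Legendre_cong cong_mult cong_add cong_refl cong_mod_self)
  then have "(\<Sum>b\<in>{0..<q}. ?F b) = (\<Sum>b\<in>{0..<q}. ?F (s * b + 0))"
    by (rule sum_residues_affine_reindex[OF assms, symmetric])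
  moreover have "?F (s * b + 0) = Legendre (b * (b + c)) q" for b
  proof -
    have "?F (s * b + 0) = Legendre (s ^ 2 * (b * (b + c))) q"
      by (simp add: power2_eq_square algebra_simps)
    then show ?thesis using Legendre_square[OF assms] by (simp add: Legendre_mult)
  qed
  ultimately show ?thesis by simp
qed

lemma sum_sum_Legendre_shift_product:
  "(\<Sum>c\<in>{0..<q}. \<Sum>b\<in>{0..<q}. Legendre (b * (b + c)) q) = 0"
proof -
  have "(\<Sum>c\<in>{0..<q}. \<Sum>b\<in>{0..<q}. Legendre (b * (b + c)) q)
      = (\<Sum>b\<in>{0..<q}. Legendre b q * (\<Sum>c\<in>{0..<q}. Legendre (c + b) q))"
    by (subst sum.swap) (simp add: Legendre_mult sum_distrib_left add.commute)
  also have "\<dots> = 0"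
    using sum_residues_shift[of "\<lambda>x. Legendre x q"] Legendre_mod sum_Legendre by simp
  finally show ?thesis .
qed

lemma sum_Legendre_shift_product:
  "(\<Sum>b\<in>{0..<q}. Legendre (b * (b + c)) q) = (if q dvd c then q - 1 else -1)"
proof -
  define J where "J c = (\<Sum>b\<in>{0..<q}. Legendre (b * (b + c)) q)" for c
  have J_cong: "J c = J c'" if "[c = c'] (mod q)" for c c'
    unfolding J_def using that by (intro sum.cong refl Legendre_cong cong_mult cong_add cong_refl)
  have J_0: "J 0 = q - 1"
  proof -
    have "J 0 = (\<Sum>b\<in>{1..<q}. Legendre (b ^ 2) q)"
      unfolding J_def residues_eq_insert_0 by (simp add: power2_eq_square Legendre_eq_0_iff)
    also have "\<dots> = (\<Sum>b\<in>{1..<q}. 1)"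
      using not_dvd_if_in_range Legendre_square by simp
    finally show ?thesis using gt_2 by simp
  qed
  have J_unit: "J t = J 1" if "\<not> q dvd t" for t
    using sum_Legendre_shift_product_scale[OF that, of 1] unfolding J_def by simp
  have "(\<Sum>t\<in>{1..<q}. J t) = (\<Sum>t\<in>{1..<q}. J 1)"
  proof (rule sum.cong)
    show "J t = J 1" if "t \<in> {1..<q}" for t
      using J_unit not_dvd_if_in_range[OF that] by blast
  qed simp
  then have "0 = (q - 1) + (q - 1) * J 1"
    using sum_sum_Legendre_shift_product J_0 gt_2 unfolding J_def residues_eq_insert_0 by simp
  then have "(q - 1) * (1 + J 1) = 0" by (simp only: distrib_left mult_1_right)
  then have "J 1 = -1" using gt_2 by simp
  moreover have "J c = J 0" if "q dvd c"
    using that by (intro J_cong) (simp add: cong_0_iff)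
  ultimately have "J c = (if q dvd c then q - 1 else -1)"
    using J_0 J_unit[of c] by argo
  then show ?thesis unfolding J_def .
qed

lemma sum_Legendre_quadratic:
  "(\<Sum>a\<in>{0..<q}. Legendre ((a + u) * (a + v)) q) = (if [u = v] (mod q) then q - 1 else -1)"
proof -
  let ?F = "\<lambda>b. Legendre (b * (b + (v - u))) q"
  have "?F (x mod q) = ?F x" for x
    by (intro Legendre_cong cong_mult cong_add cong_refl cong_mod_self)
  then have "(\<Sum>a\<in>{0..<q}. ?F (a + u)) = (\<Sum>a\<in>{0..<q}. ?F a)"
    by (rule sum_residues_shift)
  moreover have "?F (a + u) = Legendre ((a + u) * (a + v)) q" for a
    by (simp add: add.assoc)
  moreover have "q dvd v - u \<longleftrightarrow> [u = v] (mod q)"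
    by (simp add: cong_iff_dvd_diff dvd_diff_commute)
  ultimately show ?thesis using sum_Legendre_shift_product[of "v - u"] by simp
qed

lemma modular_inverse_in_range:
  assumes "x \<in> {1..<q}"
  shows "modular_inverse q x \<in> {1..<q}" and "[x * modular_inverse q x = 1] (mod q)"
proof -
  have "coprime x q"
    using not_dvd_if_in_range[OF assms] prime_q by (metis prime_imp_coprime coprime_commute)
  then show inv: "[x * modular_inverse q x = 1] (mod q)"
    by (rule cong_modular_inverse1)
  have "modular_inverse q x \<noteq> 0"
    using inv gt_2 by (auto simp: cong_iff_dvd_diff zdvd_not_zless)
  then show "modular_inverse q x \<in> {1..<q}"
    using modular_inverse_int_nonneg[of q x] modular_inverse_int_less[of q x] gt_2 by simp
qed

lemma modular_inverse_involutive:
  "x \<in> {1..<q} \<Longrightarrow> modular_inverse q (modular_inverse q x) = x"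
  using modular_inverse_in_range[of x]
  by (intro modular_inverse_int_eqI) (auto simp: mult.commute)

lemma modular_inverse_reflect:
  assumes "x \<in> {1..<q}"
  shows "modular_inverse q (q - x) = q - modular_inverse q x"
proof (rule modular_inverse_int_eqI)
  let ?z = "modular_inverse q x"
  show "q - ?z \<in> {0..<q}" using modular_inverse_in_range(1)[OF assms] by auto
  have "(q - x) * (q - ?z) = q * (q - x - ?z) + x * ?z" by (simp add: algebra_simps)
  then have "[(q - x) * (q - ?z) = x * ?z] (mod q)" by (simp add: cong_iff_dvd_diff)
  then show "[(q - x) * (q - ?z) = 1] (mod q)"
    using modular_inverse_in_range(2)[OF assms] by (rule cong_trans)
qed

lemma cong_square_if_inverse_square:
  assumes "[x * z = 1] (mod q)" and "[z ^ 2 = e] (mod q)"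
  shows "[x ^ 2 * e = 1] (mod q)"
proof -
  have "[x ^ 2 * e = x ^ 2 * z ^ 2] (mod q)" by (intro cong_mult cong_refl cong_sym[OF assms(2)])
  also have "x ^ 2 * z ^ 2 = (x * z) ^ 2" by (simp add: power_mult_distrib)
  also have "[(x * z) ^ 2 = 1 ^ 2] (mod q)" by (intro cong_pow assms(1))
  finally show ?thesis by simp
qed

end

section \<open>Jacobsthal sums\<close>

definition jacobsthal :: "int \<Rightarrow> int \<Rightarrow> int" where
  "jacobsthal q a = (\<Sum>x\<in>{0..<q}. Legendre (x * (x ^ 2 + a)) q)"

context odd_prime
begin

lemma jacobsthal_cong: "[a = b] (mod q) \<Longrightarrow> jacobsthal q a = jacobsthal q b"
  unfolding jacobsthal_def by (intro sum.cong refl Legendre_cong cong_mult cong_add cong_refl)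

lemma jacobsthal_scale:
  assumes "\<not> q dvd t"
  shows "jacobsthal q (a * t ^ 2) = Legendre t q * jacobsthal q a"
proof -
  let ?F = "\<lambda>x. Legendre (x * (x ^ 2 + a * t ^ 2)) q"
  have "?F (x mod q) = ?F x" for x
    by (intro Legendre_cong cong_mult cong_add cong_pow cong_refl cong_mod_self)
  then have "(\<Sum>x\<in>{0..<q}. ?F x) = (\<Sum>x\<in>{0..<q}. ?F (t * x + 0))"
    by (rule sum_residues_affine_reindex[OF assms, symmetric])
  moreover have "?F (t * x + 0) = Legendre t q * Legendre (x * (x ^ 2 + a)) q" for x
  proof -
    have "?F (t * x + 0) = Legendre (t ^ 2 * (t * (x * (x ^ 2 + a)))) q"
      by (simp add: power2_eq_square algebra_simps)
    then show ?thesis using Legendre_square[OF assms] by (simp add: Legendre_mult)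
  qed
  ultimately show ?thesis unfolding jacobsthal_def by (simp add: sum_distrib_left)
qed

lemma jacobsthal_0: "jacobsthal q 0 = 0"
  using Legendre_cube sum_Legendre by (simp add: jacobsthal_def power3_eq_cube power2_eq_square mult.assoc)

lemma jacobsthal_square_eq:
  assumes "Legendre a q = Legendre b q" and "\<not> q dvd a"
  shows "jacobsthal q a ^ 2 = jacobsthal q b ^ 2"
proof -
  have "\<not> q dvd b" using assms Legendre_eq_0_iff by metis
  have "Legendre (a * b) q = 1"
    using assms Legendre_square_eq[of a] by (simp add: Legendre_mult power2_eq_square)
  then obtain t where t: "[t ^ 2 = a * b] (mod q)"
    unfolding Legendre_eq_1_iff QuadRes_def by blast
  have "\<not> q dvd t"
  proof
    assume "q dvd t"
    then have "q dvd t ^ 2" by (simp add: power2_eq_square)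
    then have "q dvd a * b" using cong_dvd_iff[OF t] by simp
    then show False using prime_q \<open>\<not> q dvd a\<close> \<open>\<not> q dvd b\<close> by (simp add: prime_dvd_mult_iff)
  qed
  have "[a * b ^ 2 = b * t ^ 2] (mod q)"
    using cong_mult[OF cong_refl[of b] t] by (simp add: cong_sym_eq power2_eq_square algebra_simps)
  then have "jacobsthal q (a * b ^ 2) = jacobsthal q (b * t ^ 2)"
    by (rule jacobsthal_cong)
  then have "Legendre b q * jacobsthal q a = Legendre t q * jacobsthal q b"
    using jacobsthal_scale \<open>\<not> q dvd b\<close> \<open>\<not> q dvd t\<close> by simp
  then have "(Legendre b q * jacobsthal q a) ^ 2 = (Legendre t q * jacobsthal q b) ^ 2"
    by simp
  then show ?thesis
    using Legendre_square_eq \<open>\<not> q dvd b\<close> \<open>\<not> q dvd t\<close> by (simp add: power_mult_distrib)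
qed

end

section \<open>Primes congruent to 1 modulo 4\<close>

locale prime_1_mod_4 = odd_prime +
  assumes mod_4: "q mod 4 = 1"
begin

lemma Legendre_minus_one: "Legendre (-1) q = 1"
proof (rule sign_eq_if_cong)
  show "Legendre (-1) q \<in> {-1, 0, 1}" by (rule Legendre_cases)
  obtain k where "q = 4 * k + 1"
    using mod_4 by (metis mod_div_mult_eq add.commute mult.commute)
  then have "nat ((q - 1) div 2) = 2 * nat k" by simp
  then show "[Legendre (-1) q = 1] (mod q)"
    using Legendre_euler[of "-1"] by simp
qed simp

lemma Legendre_uminus: "Legendre (- a) q = Legendre a q"
  using Legendre_mult[of "-1" a] Legendre_minus_one by simp

lemma ex_nonresidue: "\<exists>g. Legendre g q = -1"
proof (rule ccontr)
  assume "\<nexists>g. Legendre g q = -1"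
  then have "Legendre a q = 1" if "a \<in> {1..<q}" for a
    using Legendre_cases[of a] Legendre_eq_0_iff[of a] not_dvd_if_in_range[OF that] by auto
  then have "(\<Sum>a\<in>{1..<q}. Legendre a q) = q - 1"
    using gt_2 by simp
  then show False using sum_Legendre_nonzero gt_2 by simp
qed

lemma ex_sqrt_minus_one: "\<exists>i\<in>{1..<q}. [i ^ 2 = -1] (mod q)"
proof -
  obtain y where y: "[y ^ 2 = -1] (mod q)"
    using Legendre_minus_one Legendre_eq_1_iff QuadRes_def by auto
  have "[(y mod q) ^ 2 = -1] (mod q)"
    using y cong_pow[OF cong_mod_self] cong_trans by blast
  moreover have "y mod q \<noteq> 0"
  proof
    assume "y mod q = 0"
    then have "q dvd y ^ 2" by (simp add: mod_eq_0_iff_dvd power2_eq_square)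
    moreover have "q dvd y ^ 2 + 1" using y by (simp add: cong_iff_dvd_diff)
    ultimately have "q dvd 1" using dvd_add_right_iff by blast
    then show False using gt_2 by (simp add: zdvd_not_zless)
  qed
  moreover have "0 \<le> y mod q" "y mod q < q" using gt_2 by simp_all
  ultimately show ?thesis by (intro bexI[of _ "y mod q"]) auto
qed

lemma sum_Legendre_square_roots:
  assumes "x \<in> {0..<q}"
  shows "(\<Sum>y\<in>{0..<q}. if [y ^ 2 = x ^ 2] (mod q) then Legendre y q else 0)
    = (if x = 0 then 0 else 2 * Legendre x q)"
proof -
  have "(\<Sum>y\<in>{0..<q}. if [y ^ 2 = x ^ 2] (mod q) then Legendre y q else 0)
      = (\<Sum>y\<in>{y\<in>{0..<q}. [y ^ 2 = x ^ 2] (mod q)}. Legendre y q)"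
    by (rule sum.inter_filter[symmetric]) simp
  also have "\<dots> = (if x = 0 then 0 else 2 * Legendre x q)"
  proof (cases "x = 0")
    case True
    then show ?thesis using square_roots_mod_multiple[of 0] Legendre_eq_0_iff[of 0] by simp
  next
    case False
    then have x: "x \<in> {1..<q}" using assms by auto
    have "Legendre (q - x) q = Legendre x q"
      using Legendre_uminus[of x] Legendre_cong[of "q - x" "- x"] by (simp add: cong_iff_dvd_diff)
    moreover have "x \<noteq> q - x" using odd_q by auto
    ultimately show ?thesis using square_roots_mod[OF x] False by simp
  qed
  finally show ?thesis .
qed

lemma sum_jacobsthal_squares: "(\<Sum>a\<in>{0..<q}. jacobsthal q a ^ 2) = 2 * q * (q - 1)"
proof -
  let ?A = "{0..<q}" and ?L = "\<lambda>x. Legendre x q"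
  have "jacobsthal q a ^ 2 = (\<Sum>x\<in>?A. \<Sum>y\<in>?A. ?L x * ?L y * ?L ((a + x ^ 2) * (a + y ^ 2)))" for a
    unfolding jacobsthal_def power2_eq_square[of "sum _ _"] sum_product
    by (intro sum.cong refl) (simp add: Legendre_mult ac_simps)
  then have "(\<Sum>a\<in>?A. jacobsthal q a ^ 2)
      = (\<Sum>a\<in>?A. \<Sum>x\<in>?A. \<Sum>y\<in>?A. ?L x * ?L y * ?L ((a + x ^ 2) * (a + y ^ 2)))"
    by simp
  also have "\<dots> = (\<Sum>x\<in>?A. \<Sum>y\<in>?A. \<Sum>a\<in>?A. ?L x * ?L y * ?L ((a + x ^ 2) * (a + y ^ 2)))"
    by (subst sum.swap, rule sum.cong[OF refl], rule sum.swap)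
  also have "\<dots> = (\<Sum>x\<in>?A. \<Sum>y\<in>?A.
      q * (?L x * (if [y ^ 2 = x ^ 2] (mod q) then ?L y else 0)) - ?L x * ?L y)"
  proof (intro sum.cong refl)
    fix x y
    have "(\<Sum>a\<in>?A. ?L x * ?L y * ?L ((a + x ^ 2) * (a + y ^ 2)))
        = ?L x * ?L y * (if [x ^ 2 = y ^ 2] (mod q) then q - 1 else -1)"
      by (simp only: sum_distrib_left[symmetric] sum_Legendre_quadratic)
    then show "(\<Sum>a\<in>?A. ?L x * ?L y * ?L ((a + x ^ 2) * (a + y ^ 2)))
        = q * (?L x * (if [y ^ 2 = x ^ 2] (mod q) then ?L y else 0)) - ?L x * ?L y"
      by (simp add: cong_sym_eq algebra_simps)
  qed
  also have "\<dots> = q * (\<Sum>x\<in>?A. ?L x * (if x = 0 then 0 else 2 * ?L x))"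
    by (simp add: sum_subtractf sum_distrib_left[symmetric] sum_Legendre sum_Legendre_square_roots)
  also have "\<dots> = 2 * q * (q - 1)"
  proof -
    have "?L x * (if x = 0 then 0 else 2 * ?L x) = 2" if "x \<in> {1..<q}" for x
      using Legendre_square_eq[of x] not_dvd_if_in_range[OF that] that
      by (simp add: power2_eq_square)
    then have "(\<Sum>x\<in>{1..<q}. ?L x * (if x = 0 then 0 else 2 * ?L x)) = (\<Sum>x\<in>{1..<q}. 2)"
      by (rule sum.cong[OF refl])
    then show ?thesis using gt_2 by (simp add: residues_eq_insert_0)
  qed
  finally show ?thesis .
qed

text \<open>Jacobsthal's identity, obtained by grouping the nonzero parameters in the sum of squares above
  by their quadratic character.\<close>
lemma jacobsthal_sum_two_squares: "\<exists>T. jacobsthal q (-1) ^ 2 + T ^ 2 = 4 * q"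
proof -
  obtain g where g: "Legendre g q = -1" using ex_nonresidue by blast
  let ?R = "jacobsthal q (-1) ^ 2" and ?N = "jacobsthal q g ^ 2"
  have "2 * jacobsthal q a ^ 2 = (1 + Legendre a q) * ?R + (1 - Legendre a q) * ?N"
    if "a \<in> {1..<q}" for a
  proof -
    have "\<not> q dvd a" using not_dvd_if_in_range[OF that] .
    then consider "Legendre a q = 1" | "Legendre a q = -1"
      using Legendre_cases[of a] Legendre_eq_0_iff[of a] by auto
    then show ?thesis
    proof cases
      case 1
      then show ?thesis
        using jacobsthal_square_eq[of a "-1"] \<open>\<not> q dvd a\<close> Legendre_minus_one by simp
    next
      case 2
      then show ?thesis
        using jacobsthal_square_eq[of a g] \<open>\<not> q dvd a\<close> g by simp
    qed
  qed
  then have "2 * (\<Sum>a\<in>{1..<q}. jacobsthal q a ^ 2)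
      = (\<Sum>a\<in>{1..<q}. (?R + ?N) + Legendre a q * (?R - ?N))"
    unfolding sum_distrib_left by (intro sum.cong refl) (simp add: algebra_simps)
  also have "\<dots> = (q - 1) * (?R + ?N)"
    using sum_Legendre_nonzero gt_2 by (simp add: sum.distrib sum_distrib_right[symmetric])
  finally have "2 * (2 * q * (q - 1)) = (q - 1) * (?R + ?N)"
    using sum_jacobsthal_squares jacobsthal_0 by (simp add: residues_eq_insert_0)
  then have "(q - 1) * (4 * q) = (q - 1) * (?R + ?N)"
    by (simp add: algebra_simps)
  then have "?R + ?N = 4 * q"
    using gt_2 by simp
  then show ?thesis by blast
qed

lemma Legendre_cubic_reflect:
  "Legendre ((q - x) * ((q - x) ^ 2 - 1)) q = Legendre (x * (x ^ 2 - 1)) q"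
proof -
  have "[(q - x) * ((q - x) ^ 2 - 1) = - (x * (x ^ 2 - 1))] (mod q)"
  proof -
    have "[q - x = - x] (mod q)" by (simp add: cong_iff_dvd_diff)
    then have "[(q - x) * ((q - x) ^ 2 - 1) = (- x) * ((- x) ^ 2 - 1)] (mod q)"
      by (intro cong_mult cong_diff cong_pow cong_refl)
    then show ?thesis by simp
  qed
  then show ?thesis using Legendre_cong Legendre_uminus by metis
qed

lemma Legendre_cubic_inverse:
  assumes "[x * z = 1] (mod q)" and "\<not> q dvd x"
  shows "Legendre (z * (z ^ 2 - 1)) q = Legendre (x * (x ^ 2 - 1)) q"
proof -
  have "[x ^ 4 * (z * (z ^ 2 - 1)) = x * (x * z) ^ 3 - x ^ 3 * (x * z)] (mod q)"
    by (simp add: algebra_simps power2_eq_square power3_eq_cube power4_eq_xxxx)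
  also have "[x * (x * z) ^ 3 - x ^ 3 * (x * z) = x * 1 ^ 3 - x ^ 3 * 1] (mod q)"
    by (intro cong_diff cong_mult cong_pow cong_refl assms(1))
  finally have "[(x ^ 2) ^ 2 * (z * (z ^ 2 - 1)) = - (x * (x ^ 2 - 1))] (mod q)"
    by (simp add: algebra_simps power2_eq_square power3_eq_cube power4_eq_xxxx)
  then have "Legendre ((x ^ 2) ^ 2 * (z * (z ^ 2 - 1))) q = Legendre (x * (x ^ 2 - 1)) q"
    using Legendre_cong Legendre_uminus by metis
  moreover have "Legendre ((x ^ 2) ^ 2) q = 1"
    using assms(2) prime_q by (intro Legendre_square) (simp add: prime_dvd_power_iff)
  ultimately show ?thesis
    by (simp only: Legendre_mult mult_1)
qed

lemma Legendre_cubic_sqrt_minus_one: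
  assumes "[i ^ 2 = -1] (mod q)"
  shows "Legendre (i * (i ^ 2 - 1)) q = 1"
proof -
  have "q dvd i ^ 2 + 1" using assms by (simp add: cong_iff_dvd_diff)
  then have "q dvd (i ^ 2 + 1) * (1 + i)" by simp
  moreover have "(i ^ 2 + 1) * (1 + i) = i * (i ^ 2 - 1) - (- ((1 + i) ^ 2))"
    by (simp add: power2_eq_square algebra_simps)
  ultimately have "q dvd i * (i ^ 2 - 1) - (- ((1 + i) ^ 2))" by simp
  then have "[i * (i ^ 2 - 1) = - ((1 + i) ^ 2)] (mod q)"
    by (simp only: cong_iff_dvd_diff)
  then have "Legendre (i * (i ^ 2 - 1)) q = Legendre ((1 + i) ^ 2) q"
    by (simp only: Legendre_cong Legendre_uminus)
  moreover have "\<not> q dvd 1 + i"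
  proof
    assume "q dvd 1 + i"
    then have "[i = -1] (mod q)" by (simp add: cong_iff_dvd_diff add.commute)
    then have "[i ^ 2 = (-1) ^ 2] (mod q)" by (rule cong_pow)
    then have "[-1 = 1] (mod q)" using cong_trans[OF cong_sym[OF assms]] by simp
    then show False using gt_2 by (simp add: cong_iff_dvd_diff zdvd_not_zless)
  qed
  ultimately show ?thesis using Legendre_square by simp
qed

text \<open>The maps \<open>x \<mapsto> -x\<close> and \<open>x \<mapsto> 1/x\<close> preserve this set and generate a free action of the
  Klein four-group on it.\<close>
definition cubic_nonresidues :: "int set" where
  "cubic_nonresidues = {x\<in>{1..<q}. \<not> [x ^ 2 = 1] (mod q) \<and> \<not> [x ^ 2 = -1] (mod q)
                          \<and> Legendre (x * (x ^ 2 - 1)) q = -1}"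

lemma reflect_mem_cubic_nonresidues:
  assumes "x \<in> cubic_nonresidues"
  shows "q - x \<in> cubic_nonresidues"
proof -
  have "[(q - x) ^ 2 = (- x) ^ 2] (mod q)"
    by (intro cong_pow) (simp add: cong_iff_dvd_diff)
  then have "[(q - x) ^ 2 = e] (mod q) \<longleftrightarrow> [x ^ 2 = e] (mod q)" for e
    using cong_sym cong_trans by (metis power2_minus)
  then show ?thesis
    using assms Legendre_cubic_reflect unfolding cubic_nonresidues_def by auto
qed

lemma modular_inverse_mem_cubic_nonresidues:
  assumes "x \<in> cubic_nonresidues"
  shows "modular_inverse q x \<in> cubic_nonresidues"
proof -
  define z where "z = modular_inverse q x"
  from assms have x: "x \<in> {1..<q}" and not_1: "\<not> [x ^ 2 = 1] (mod q)"
    and not_minus_1: "\<not> [x ^ 2 = -1] (mod q)" and nonres: "Legendre (x * (x ^ 2 - 1)) q = -1"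
    unfolding cubic_nonresidues_def by auto
  have z: "z \<in> {1..<q}" "[x * z = 1] (mod q)"
    using modular_inverse_in_range[OF x] unfolding z_def by auto
  have "\<not> [z ^ 2 = 1] (mod q)"
    using cong_square_if_inverse_square[OF z(2), of 1] not_1 by auto
  moreover have "\<not> [z ^ 2 = -1] (mod q)"
  proof
    assume "[z ^ 2 = -1] (mod q)"
    then have "[x ^ 2 * -1 = 1] (mod q)"
      by (rule cong_square_if_inverse_square[OF z(2)])
    then have "[- (x ^ 2) = - (-1)] (mod q)" by simp
    then show False using not_minus_1 cong_minus_minus_iff by blast
  qed
  ultimately show ?thesis
    using z nonres Legendre_cubic_inverse[OF z(2) not_dvd_if_in_range[OF x]]
    unfolding z_def cubic_nonresidues_def by simp
qed

lemma modular_inverse_neq_if_mem_cubic_nonresidues: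
  assumes "x \<in> cubic_nonresidues"
  shows "modular_inverse q x \<noteq> x" and "modular_inverse q x \<noteq> q - x"
proof -
  from assms have x: "x \<in> {1..<q}" and not_1: "\<not> [x ^ 2 = 1] (mod q)"
    and not_minus_1: "\<not> [x ^ 2 = -1] (mod q)"
    unfolding cubic_nonresidues_def by auto
  note inv = modular_inverse_in_range(2)[OF x]
  show "modular_inverse q x \<noteq> x"
    using inv not_1 by (auto simp: power2_eq_square)
  show "modular_inverse q x \<noteq> q - x"
  proof
    assume "modular_inverse q x = q - x"
    then have "[x * (q - x) = 1] (mod q)" using inv by simp
    moreover have "[x * (q - x) = - (x ^ 2)] (mod q)"
      by (simp add: cong_iff_dvd_diff power2_eq_square algebra_simps)
    ultimately have "[x ^ 2 = -1] (mod q)"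
      by (metis cong_minus_minus_iff cong_sym cong_trans minus_minus)
    then show False using not_minus_1 by simp
  qed
qed

lemma four_dvd_card_cubic_nonresidues: "4 dvd card cubic_nonresidues"
proof (rule four_dvd_card_if_free_klein_action[of _ "\<lambda>x. q - x" "modular_inverse q"])
  show "finite cubic_nonresidues"
    unfolding cubic_nonresidues_def by (rule finite_subset[of _ "{1..<q}"]) auto
  show "\<forall>x\<in>cubic_nonresidues. q - x \<in> cubic_nonresidues
      \<and> modular_inverse q x \<in> cubic_nonresidues \<and> q - (q - x) = x
      \<and> modular_inverse q (modular_inverse q x) = x
      \<and> q - modular_inverse q x = modular_inverse q (q - x)
      \<and> q - x \<noteq> x \<and> modular_inverse q x \<noteq> x \<and> q - x \<noteq> modular_inverse q x"
  proof
    fix x assume x: "x \<in> cubic_nonresidues"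
    then have "x \<in> {1..<q}" unfolding cubic_nonresidues_def by simp
    then show "q - x \<in> cubic_nonresidues
      \<and> modular_inverse q x \<in> cubic_nonresidues \<and> q - (q - x) = x
      \<and> modular_inverse q (modular_inverse q x) = x
      \<and> q - modular_inverse q x = modular_inverse q (q - x)
      \<and> q - x \<noteq> x \<and> modular_inverse q x \<noteq> x \<and> q - x \<noteq> modular_inverse q x"
      using x odd_q reflect_mem_cubic_nonresidues modular_inverse_mem_cubic_nonresidues
        modular_inverse_involutive modular_inverse_reflect
        modular_inverse_neq_if_mem_cubic_nonresidues[OF x]
      by auto
  qed
qed

lemma roots_x5_minus_x_mod:
  assumes i: "i \<in> {1..<q}" "[i ^ 2 = -1] (mod q)"
  shows "{0..<q} - {0, 1, q - 1, i, q - i}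
      = {x\<in>{1..<q}. \<not> [x ^ 2 = 1] (mod q) \<and> \<not> [x ^ 2 = -1] (mod q)}"
    and "card {0, 1, q - 1, i, q - i} = 5"
proof -
  have "[x ^ 2 = 1] (mod q) \<longleftrightarrow> x = 1 \<or> x = q - 1" if "x \<in> {0..<q}" for x
    using square_roots_mod[of 1] that gt_2 by auto
  moreover have "[x ^ 2 = -1] (mod q) \<longleftrightarrow> x = i \<or> x = q - i" if "x \<in> {0..<q}" for x
  proof -
    have "[x ^ 2 = -1] (mod q) \<longleftrightarrow> [x ^ 2 = i ^ 2] (mod q)"
      using i(2) cong_sym cong_trans by meson
    then show ?thesis using square_roots_mod[OF i(1)] that by auto
  qed
  moreover have "i \<noteq> 1" "i \<noteq> q - 1"
  proof -
    have "\<not> [-1 = 1] (mod q)" using gt_2 by (simp add: cong_iff_dvd_diff zdvd_not_zless)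
    then have "\<not> [i ^ 2 = 1] (mod q)" using i(2) cong_sym cong_trans by meson
    then show "i \<noteq> 1" "i \<noteq> q - 1" using calculation(1) i(1) by auto
  qed
  ultimately show "{0..<q} - {0, 1, q - 1, i, q - i}
      = {x\<in>{1..<q}. \<not> [x ^ 2 = 1] (mod q) \<and> \<not> [x ^ 2 = -1] (mod q)}"
    using i(1) by auto
  show "card {0, 1, q - 1, i, q - i} = 5"
    using \<open>i \<noteq> 1\<close> \<open>i \<noteq> q - 1\<close> i(1) odd_q gt_2 by (auto simp: card_insert_if)
qed

lemma sum_Legendre_cubic_roots_x5_minus_x:
  assumes i: "i \<in> {1..<q}" "[i ^ 2 = -1] (mod q)"
  shows "(\<Sum>x\<in>{0, 1, q - 1, i, q - i}. Legendre (x * (x ^ 2 - 1)) q) = 2"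
proof -
  have "Legendre ((q - 1) * ((q - 1) ^ 2 - 1)) q = 0" "Legendre (0 * (0 ^ 2 - 1)) q = 0"
    "Legendre (1 * (1 ^ 2 - 1)) q = 0"
    using Legendre_cubic_reflect[of 1] Legendre_eq_0_iff by simp_all
  moreover have "Legendre (i * (i ^ 2 - 1)) q = 1" "Legendre ((q - i) * ((q - i) ^ 2 - 1)) q = 1"
    using Legendre_cubic_sqrt_minus_one[OF i(2)] Legendre_cubic_reflect[of i] by simp_all
  moreover have "distinct [0, 1, q - 1, i, q - i]"
    using roots_x5_minus_x_mod(2)[OF i] by (simp add: card_insert_if split: if_splits)
  ultimately show ?thesis by simp
qed

lemma sum_Legendre_cubic_off_roots:
  "(\<Sum>x\<in>{x\<in>{1..<q}. \<not> [x ^ 2 = 1] (mod q) \<and> \<not> [x ^ 2 = -1] (mod q)}.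
      Legendre (x * (x ^ 2 - 1)) q)
    = int (card {x\<in>{1..<q}. \<not> [x ^ 2 = 1] (mod q) \<and> \<not> [x ^ 2 = -1] (mod q)})
      - 2 * int (card cubic_nonresidues)"
  (is "(\<Sum>x\<in>?G. ?f x) = _")
proof -
  have f_G: "?f x = 1 \<or> ?f x = -1" if "x \<in> ?G" for x
  proof -
    have "\<not> q dvd x" "\<not> q dvd x ^ 2 - 1"
      using that not_dvd_if_in_range by (auto simp: cong_iff_dvd_diff)
    then show ?thesis
      using Legendre_cases[of "x * (x ^ 2 - 1)"] Legendre_eq_0_iff prime_q
      by (auto simp: prime_dvd_mult_iff)
  qed
  have N: "cubic_nonresidues = {x\<in>?G. ?f x = -1}"
    unfolding cubic_nonresidues_def by auto
  have fin: "finite ?G" "cubic_nonresidues \<subseteq> ?G"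
    unfolding N by (auto intro: finite_subset[of _ "{1..<q}"])
  have "(\<Sum>x\<in>?G. ?f x) = (\<Sum>x\<in>?G - cubic_nonresidues. ?f x) + (\<Sum>x\<in>cubic_nonresidues. ?f x)"
    by (rule sum.subset_diff[OF fin(2) fin(1)])
  also have "(\<Sum>x\<in>?G - cubic_nonresidues. ?f x) = (\<Sum>x\<in>?G - cubic_nonresidues. 1)"
    using f_G unfolding N by (intro sum.cong refl) auto
  also have "(\<Sum>x\<in>cubic_nonresidues. ?f x) = (\<Sum>x\<in>cubic_nonresidues. -1)"
    unfolding N by (intro sum.cong refl) auto
  finally show ?thesis
    using card_Diff_subset[OF finite_subset[OF fin(2) fin(1)] fin(2)] card_mono[OF fin(1,2)]
    by simp
qed

lemma jacobsthal_minus_one_mod_8: "[jacobsthal q (-1) = q - 3] (mod 8)"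
proof -
  obtain i where i: "i \<in> {1..<q}" "[i ^ 2 = -1] (mod q)"
    using ex_sqrt_minus_one by blast
  define E where "E = {0, 1, q - 1, i, q - i}"
  define G where "G = {x\<in>{1..<q}. \<not> [x ^ 2 = 1] (mod q) \<and> \<not> [x ^ 2 = -1] (mod q)}"
  have E_sub: "E \<subseteq> {0..<q}" using i(1) unfolding E_def by auto
  have G_eq: "G = {0..<q} - E" and "card E = 5"
    using roots_x5_minus_x_mod[OF i] unfolding E_def G_def by simp_all
  moreover have "card E \<le> card {0..<q}" using E_sub by (intro card_mono) auto
  ultimately have "int (card G) = q - 5"
    using E_sub by (simp add: card_Diff_subset finite_subset)
  moreover have "jacobsthal q (-1)
      = (\<Sum>x\<in>E. Legendre (x * (x ^ 2 - 1)) q) + (\<Sum>x\<in>G. Legendre (x * (x ^ 2 - 1)) q)"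
    unfolding jacobsthal_def G_eq using sum.subset_diff[OF E_sub] by (simp add: add.commute)
  ultimately have "jacobsthal q (-1) = q - 3 - 2 * int (card cubic_nonresidues)"
    using sum_Legendre_cubic_roots_x5_minus_x[OF i] sum_Legendre_cubic_off_roots
    unfolding E_def G_def by simp
  then show ?thesis
    using four_dvd_card_cubic_nonresidues by (auto simp: cong_iff_dvd_diff elim!: dvdE)
qed

end

section \<open>Primes of the form \<open>m\<^sup>2 + 1\<close>\<close>

lemma square_cases_if_sum_two_squares_cong:
  fixes u w m b :: int
  assumes "u ^ 2 + w ^ 2 = m ^ 2 + 1" and "u * m - w = (m ^ 2 + 1) * b"
  shows "u ^ 2 = 1 \<or> u ^ 2 = m ^ 2"
proof -
  have "(m ^ 2 + 1) * ((u - m * b) ^ 2 + b ^ 2) = u ^ 2 + (u * m - (m ^ 2 + 1) * b) ^ 2"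
    by (simp add: algebra_simps power2_eq_square)
  also have "\<dots> = (m ^ 2 + 1) * 1"
    using assms by (simp add: algebra_simps)
  finally have "(u - m * b) ^ 2 + b ^ 2 = 1"
    by (metis add_nonneg_pos mult_cancel_left not_less_iff_gr_or_eq zero_le_power2 zero_less_one)
  then consider "b = 0" "(u - m * b) ^ 2 = 1" | "u - m * b = 0" "b ^ 2 = 1"
    by (smt (verit) power2_less_eq_zero_iff zero_le_power2 power2_eq_1_iff)
  then show ?thesis
    by cases (auto simp: power_mult_distrib)
qed

lemma sum_two_squares_eq_prime_square_plus_one:
  fixes u v m :: int
  assumes "prime (m ^ 2 + 1)" and "u ^ 2 + v ^ 2 = m ^ 2 + 1"
  shows "u ^ 2 = 1 \<or> u ^ 2 = m ^ 2"
proof -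
  have "(u * m - v) * (u * m - (- v)) = (m ^ 2 + 1) * (u ^ 2 - 1)"
    using assms(2) by (simp add: algebra_simps power2_eq_square)
  then have "(m ^ 2 + 1) dvd (u * m - v) \<or> (m ^ 2 + 1) dvd (u * m - (- v))"
    using assms(1) by (metis dvd_triv_left prime_dvd_mult_iff)
  then obtain w b where "w ^ 2 = v ^ 2" "u * m - w = (m ^ 2 + 1) * b"
    by (metis dvdE power2_minus)
  then show ?thesis
    using square_cases_if_sum_two_squares_cong assms(2) by metis
qed

lemma prime_1_mod_4_square_plus_one:
  fixes m :: int
  assumes "prime (m ^ 2 + 1)" and "even m"
  shows "prime_1_mod_4 (m ^ 2 + 1)"
proof
  obtain k where "m = 2 * k" using \<open>even m\<close> by blast
  then have "m ^ 2 + 1 = 4 * k ^ 2 + 1" by (simp add: power_mult_distrib)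
  then show "(m ^ 2 + 1) mod 4 = 1" and "2 < m ^ 2 + 1"
    using prime_ge_2_int[OF assms(1)] by presburger+
qed (fact assms(1))

lemma jacobsthal_minus_one_eq_minus_two:
  fixes m :: int
  assumes prime: "prime (m ^ 2 + 1)" and "4 dvd m"
  shows "jacobsthal (m ^ 2 + 1) (-1) = -2"
proof -
  define q where "q = m ^ 2 + 1"
  obtain k where "m = 4 * k" using \<open>4 dvd m\<close> by blast
  then have q_16: "q = 16 * k ^ 2 + 1" unfolding q_def by (simp add: power_mult_distrib)
  interpret prime_1_mod_4 q
    unfolding q_def using prime \<open>m = 4 * k\<close> by (intro prime_1_mod_4_square_plus_one) auto
  obtain T where T: "jacobsthal q (-1) ^ 2 + T ^ 2 = 4 * q"
    using jacobsthal_sum_two_squares by blast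
  obtain j where j: "jacobsthal q (-1) - (q - 3) = 8 * j"
    using jacobsthal_minus_one_mod_8 by (auto simp: cong_iff_dvd_diff)
  obtain u where u: "jacobsthal q (-1) = 2 * u" "u mod 4 = 3"
  proof (rule that)
    show "jacobsthal q (-1) = 2 * (4 * (j + 2 * k ^ 2) - 1)" using j q_16 by simp
    show "(4 * (j + 2 * k ^ 2) - 1) mod 4 = 3" by presburger
  qed
  then have "T ^ 2 = 4 * (q - u ^ 2)" using T by (simp add: power_mult_distrib)
  then have "even T" by (metis dvd_mult2 even_numeral even_power zero_less_numeral)
  then obtain v where "T = 2 * v" by blast
  then have "u ^ 2 + v ^ 2 = m ^ 2 + 1"
    using T u(1) unfolding q_def by (simp add: power_mult_distrib)
  then have "u ^ 2 = 1 \<or> u ^ 2 = m ^ 2"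
    using sum_two_squares_eq_prime_square_plus_one prime by blast
  moreover have "odd u" "even m" using u(2) \<open>m = 4 * k\<close> by presburger+
  then have "u ^ 2 \<noteq> m ^ 2" by (metis even_power zero_less_numeral)
  ultimately have "u = 1 \<or> u = -1" by (simp add: power2_eq_1_iff)
  then show ?thesis using u unfolding q_def by auto
qed

lemma card_wpoints_affine_x3_minus_x:
  fixes m :: int
  assumes "prime (m ^ 2 + 1)" and "4 dvd m"
  shows "int (card (wpoints_affine (m ^ 2 + 1) (-1) 0)) = m ^ 2 - 1"
proof -
  interpret prime_1_mod_4 "m ^ 2 + 1"
    using assms by (intro prime_1_mod_4_square_plus_one) (auto elim: dvd_trans[rotated])
  have "(\<Sum>x\<in>{0..<m ^ 2 + 1}. Legendre (x ^ 3 + -1 * x + 0) (m ^ 2 + 1)) = jacobsthal (m ^ 2 + 1) (-1)"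
    unfolding jacobsthal_def by (simp add: power2_eq_square power3_eq_cube algebra_simps)
  then show ?thesis
    using card_wpoints_affine jacobsthal_minus_one_eq_minus_two[OF assms] by simp
qed

theorem corollary3:
  fixes p n :: nat
  assumes "p > 0" and "n > 0"
    and "prime (int (p ^ 2 * 16 ^ n + 1))"
  shows "wcard (int (p ^ 2 * 16 ^ n + 1)) (-1) 0 = p ^ 2 * 16 ^ n"
proof -
  define m where "m = int (p * 4 ^ n)"
  have q: "int (p ^ 2 * 16 ^ n + 1) = m ^ 2 + 1"
  proof -
    have "(16::nat) ^ n = (4 ^ n) ^ 2" by (simp flip: power_mult_distrib add: power2_eq_square)
    then show ?thesis unfolding m_def by (simp add: power_mult_distrib)
  qed
  have "4 dvd m"
    using \<open>n > 0\<close> unfolding m_def by (simp add: dvd_power)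
  with assms(3) have "int (card (wpoints_affine (m ^ 2 + 1) (-1) 0)) = m ^ 2 - 1"
    unfolding q by (rule card_wpoints_affine_x3_minus_x)
  then show ?thesis
    unfolding wcard_def q using q by linarith
qed

end
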